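(* The map $R:\mathbb{CP}^2\dashrightarrow\mathbb{CP}^2$ is algebraically stable.
   Context: $R[U:V:W]=[(U^2+V^2)^2:V^2(U+W)^2:(V^2+W^2)^2]$, a rational map of $\mathbb{CP}^2$ with indeterminacy points $[\pm i:1:\mp i]$. A rational map $R:\mathbb{CP}^2\dashrightarrow\mathbb{CP}^2$ is algebraically stable if there is no integer $n\ge0$ and no algebraic curve $V$ collapsed by $R$ (to a point) such that $R^n(V)$ is contained in the indeterminacy set of $R$; equivalently $\deg R^n=(\deg R)^n$ for all $n$, where $\deg$ is the degree of the reduced homogeneous lift. *)

theory Defs
  imports "HOL-Computational_Algebra.Polynomial"
begin

text \<open>Trivariate polynomials over the complex numbers, represented as nested
univariate polynomials: C[U][V][W]. The innermost variable is U, the middle V,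
the outermost W.\<close>

type_synonym poly3 = "complex poly poly poly"

definition varU :: poly3 where "varU = [:[:[:0, 1:]:]:]"
definition varV :: poly3 where "varV = [:[:0, 1:]:]"
definition varW :: poly3 where "varW = [:0, 1:]"
definition const3 :: "complex \<Rightarrow> poly3" where "const3 c = [:[:[:c:]:]:]"

definition coeff3 :: "poly3 \<Rightarrow> nat \<Rightarrow> nat \<Rightarrow> nat \<Rightarrow> complex" where
  "coeff3 P i j k = coeff (coeff (coeff P k) j) i"

definition homogeneous3 :: "nat \<Rightarrow> poly3 \<Rightarrow> bool" where
  "homogeneous3 d P \<longleftrightarrow> (\<forall>i j k. coeff3 P i j k \<noteq> 0 \<longrightarrow> i + j + k = d)"

definition subst3 :: "poly3 \<Rightarrow> poly3 \<times> poly3 \<times> poly3 \<Rightarrow> poly3" where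
  "subst3 P G = (case G of (A, B, C) \<Rightarrow>
     poly (map_poly (\<lambda>q. poly (map_poly (\<lambda>r. poly (map_poly const3 r) A) q) B) P) C)"

type_synonym lift3 = "poly3 \<times> poly3 \<times> poly3"

definition comp_lift :: "lift3 \<Rightarrow> lift3 \<Rightarrow> lift3" where
  "comp_lift F G = (case F of (F1, F2, F3) \<Rightarrow> (subst3 F1 G, subst3 F2 G, subst3 F3 G))"

primrec iter_lift :: "lift3 \<Rightarrow> nat \<Rightarrow> lift3" where
  "iter_lift F 0 = (varU, varV, varW)"
| "iter_lift F (Suc n) = comp_lift F (iter_lift F n)"

definition nonzero_lift :: "lift3 \<Rightarrow> bool" where
  "nonzero_lift F = (case F of (F1, F2, F3) \<Rightarrow> F1 \<noteq> 0 \<or> F2 \<noteq> 0 \<or> F3 \<noteq> 0)"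

definition homogeneous_lift :: "nat \<Rightarrow> lift3 \<Rightarrow> bool" where
  "homogeneous_lift d F = (case F of (F1, F2, F3) \<Rightarrow>
     homogeneous3 d F1 \<and> homogeneous3 d F2 \<and> homogeneous3 d F3)"

definition reduced_lift :: "lift3 \<Rightarrow> bool" where
  "reduced_lift F = (case F of (F1, F2, F3) \<Rightarrow>
     (\<forall>h. h dvd F1 \<and> h dvd F2 \<and> h dvd F3 \<longrightarrow> is_unit h))"

definition same_map :: "lift3 \<Rightarrow> lift3 \<Rightarrow> bool" where
  "same_map G F = (nonzero_lift G \<and> nonzero_lift F \<and>
     (case G of (G1, G2, G3) \<Rightarrow> case F of (F1, F2, F3) \<Rightarrow>
        G1 * F2 = G2 * F1 \<and> G1 * F3 = G3 * F1 \<and> G2 * F3 = G3 * F2))"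

definition map_deg :: "lift3 \<Rightarrow> nat" where
  "map_deg F = (THE d. \<exists>G. same_map G F \<and> reduced_lift G \<and> homogeneous_lift d G)"

definition algebraically_stable :: "lift3 \<Rightarrow> bool" where
  "algebraically_stable F \<longleftrightarrow> (\<forall>n. map_deg (iter_lift F n) = map_deg F ^ n)"

definition R_lift :: lift3 where
  "R_lift = ((varU^2 + varV^2)^2, varV^2 * (varU + varW)^2, (varV^2 + varW^2)^2)"

end

theory Submission
  imports Defs
    "HOL-Computational_Algebra.Polynomial_Factorial"
    "HOL-Computational_Algebra.Field_as_Ring"
    "HOL-Computational_Algebra.Fundamental_Theorem_Algebra"
begin

text \<open>The lift of the n-th iterate obtained by composing the lift of R is homogeneous of degree 4^n,
so it suffices to show that it is reduced. On the invariant line V = 0 the iterate acts as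
[U:0:W] \<mapsto> [U^N:0:W^N], so a common factor h of its first and third components has no zero on
that line other than the origin. Restricted to any affine line avoiding its zeros, h is a nowhere
vanishing polynomial and hence constant; this first gives h(0) \<noteq> 0, and then, since the first
component F scales like F(tx) = t^N F(x), that h is constant along every line through the origin
on which F does not vanish. Thus (h - h(0)) F = 0, so h is a nonzero constant.\<close>

section \<open>Evaluation homomorphisms\<close>

locale comm_ring_hom =
  fixes hom :: "'a::comm_ring_1 \<Rightarrow> 'b::comm_ring_1"
  assumes hom_add [simp]: "hom (x + y) = hom x + hom y"
    and hom_mult [simp]: "hom (x * y) = hom x * hom y"
    and hom_one [simp]: "hom 1 = 1"
begin

lemma hom_zero [simp]: "hom 0 = 0"
  using hom_add[of 0 0] by simp

lemma hom_diff [simp]: "hom (x - y) = hom x - hom y"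
  using hom_add[of "x - y" y] by (simp add: eq_diff_eq)

lemma hom_power [simp]: "hom (x ^ n) = hom x ^ n"
  by (induction n) simp_all

lemma map_poly_hom: "comm_ring_hom (map_poly hom)"
proof
  show "map_poly hom (p + q) = map_poly hom p + map_poly hom q" for p q
    by (intro poly_eqI) (simp add: coeff_map_poly)
  then show "map_poly hom (p * q) = map_poly hom p * map_poly hom q" for p q
    by (induction p) (simp_all add: map_poly_pCons map_poly_smult)
  show "map_poly hom 1 = 1"
    by (simp add: one_pCons map_poly_pCons)
qed

lemma eval_hom: "comm_ring_hom (\<lambda>p. poly (map_poly hom p) x)"
proof -
  interpret map_poly_hom: comm_ring_hom "map_poly hom"
    by (rule map_poly_hom)
  show ?thesis
    by unfold_locales (simp_all add: poly_mult)
qed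

lemma poly_map_poly_natural:
  assumes "comm_ring_hom \<phi>"
  shows "\<phi> (poly (map_poly hom p) x) = poly (map_poly (\<phi> \<circ> hom) p) (\<phi> x)"
proof -
  interpret \<phi>: comm_ring_hom \<phi> by (rule assms)
  show ?thesis
    by (induction p) (simp_all add: map_poly_pCons)
qed

end

definition eval3 :: "('a::comm_ring_1 \<Rightarrow> 'b::comm_ring_1) \<Rightarrow> 'a poly poly poly \<Rightarrow> 'b \<Rightarrow> 'b \<Rightarrow> 'b \<Rightarrow> 'b"
  where "eval3 f P a b c = poly (map_poly (\<lambda>q. poly (map_poly (\<lambda>r. poly (map_poly f r) a) q) b) P) c"

context comm_ring_hom
begin

lemma eval3_hom: "comm_ring_hom (\<lambda>P. eval3 hom P a b c)"
  unfolding eval3_def by (intro comm_ring_hom.eval_hom eval_hom)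

lemma eval3_natural:
  assumes "comm_ring_hom \<phi>"
  shows "\<phi> (eval3 hom P a b c) = eval3 (\<phi> \<circ> hom) P (\<phi> a) (\<phi> b) (\<phi> c)"
proof -
  have "\<phi> \<circ> (\<lambda>r. poly (map_poly hom r) a) = (\<lambda>r. poly (map_poly (\<phi> \<circ> hom) r) (\<phi> a))"
    using poly_map_poly_natural[OF assms] by (simp add: fun_eq_iff)
  moreover have "\<phi> \<circ> (\<lambda>q. poly (map_poly (\<lambda>r. poly (map_poly hom r) a) q) b) =
      (\<lambda>q. poly (map_poly (\<phi> \<circ> (\<lambda>r. poly (map_poly hom r) a)) q) (\<phi> b))"
    using comm_ring_hom.poly_map_poly_natural[OF eval_hom assms] by (simp add: fun_eq_iff)
  ultimately show ?thesis
    unfolding eval3_def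
    using comm_ring_hom.poly_map_poly_natural[OF comm_ring_hom.eval_hom[OF eval_hom] assms]
    by simp
qed

end

lemma eval3_vars [simp]:
  fixes f :: "complex \<Rightarrow> 'b::comm_ring_1"
  assumes "comm_ring_hom f"
  shows "eval3 f varU a b c = a" "eval3 f varV a b c = b" "eval3 f varW a b c = c"
    and "eval3 f (const3 z) a b c = f z"
  using comm_ring_hom.hom_zero[OF assms] comm_ring_hom.hom_one[OF assms]
  by (simp_all add: eval3_def varU_def varV_def varW_def const3_def map_poly_pCons)

lemma comm_ring_hom_const3: "comm_ring_hom const3"
  by unfold_locales (simp_all add: const3_def one_pCons)

lemma subst3_eq_eval3: "subst3 P (A, B, C) = eval3 const3 P A B C"
  by (simp add: subst3_def eval3_def)

interpretation subst3: comm_ring_hom "\<lambda>P. subst3 P (A, B, C)" for A B C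
  unfolding subst3_eq_eval3 by (rule comm_ring_hom.eval3_hom[OF comm_ring_hom_const3])

definition poly3_eval :: "poly3 \<Rightarrow> complex \<Rightarrow> complex \<Rightarrow> complex \<Rightarrow> complex"
  where "poly3_eval P u v w = eval3 (\<lambda>x. x) P u v w"

lemma comm_ring_hom_id: "comm_ring_hom (\<lambda>x::'a::comm_ring_1. x)"
  by unfold_locales simp_all

interpretation poly3_eval: comm_ring_hom "\<lambda>P. poly3_eval P u v w" for u v w
  unfolding poly3_eval_def by (rule comm_ring_hom.eval3_hom[OF comm_ring_hom_id])

lemma poly3_eval_vars [simp]:
  "poly3_eval varU u v w = u" "poly3_eval varV u v w = v" "poly3_eval varW u v w = w"
  "poly3_eval (const3 z) u v w = z"
  unfolding poly3_eval_def by (simp_all add: comm_ring_hom_id)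

lemma comm_ring_hom_pCons_const: "comm_ring_hom (\<lambda>x::'a::comm_ring_1. [:x:])"
  by unfold_locales simp_all

lemma poly_eval3_curve:
  "poly (eval3 (\<lambda>x. [:x:]) P a b c) t = poly3_eval P (poly a t) (poly b t) (poly c t)"
proof -
  interpret poly_at: comm_ring_hom "\<lambda>p. poly p t"
    by unfold_locales (simp_all add: poly_mult)
  have "poly (eval3 (\<lambda>x. [:x:]) P a b c) t = eval3 ((\<lambda>p. poly p t) \<circ> (\<lambda>x. [:x:])) P (poly a t) (poly b t) (poly c t)"
    by (rule comm_ring_hom.eval3_natural[OF comm_ring_hom_pCons_const poly_at.comm_ring_hom_axioms])
  then show ?thesis
    by (simp add: poly3_eval_def o_def)
qed

lemma poly3_eq_0_if_eval_eq_0: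
  assumes "\<And>u v w. poly3_eval P u v w = 0"
  shows "P = 0"
proof -
  have "map_poly (\<lambda>q. poly (map_poly (\<lambda>r. poly r u) q) v) P = 0" for u v
    using assms by (simp add: poly3_eval_def eval3_def map_poly_idI poly_all_0_iff_0[symmetric])
  then have "poly (map_poly (\<lambda>r. poly r u) (coeff P k)) v = 0" for u v k
    by (metis coeff_0 coeff_map_poly poly_0 map_poly_0)
  then have "map_poly (\<lambda>r. poly r u) (coeff P k) = 0" for u k
    by (simp add: poly_all_0_iff_0[symmetric])
  then have "poly (coeff (coeff P k) j) u = 0" for u k j
    by (metis coeff_0 coeff_map_poly poly_0)
  then have "coeff (coeff P k) j = 0" for k j
    by (simp add: poly_all_0_iff_0[symmetric])
  then show ?thesis
    by (intro poly_eqI) simp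
qed

lemma subst3_vars [simp]:
  "subst3 varU (A, B, C) = A" "subst3 varV (A, B, C) = B" "subst3 varW (A, B, C) = C"
  by (simp_all add: subst3_eq_eval3 comm_ring_hom_const3)

lemma iter_lift_R_Suc:
  "iter_lift R_lift (Suc n) = (case iter_lift R_lift n of (A, B, C) \<Rightarrow>
     ((A^2 + B^2)^2, B^2 * (A + C)^2, (B^2 + C^2)^2))"
  by (simp add: comp_lift_def R_lift_def split: prod.split)

definition R_point :: "complex \<times> complex \<times> complex \<Rightarrow> complex \<times> complex \<times> complex"
  where "R_point = (\<lambda>(u, v, w). ((u^2 + v^2)^2, v^2 * (u + w)^2, (v^2 + w^2)^2))"

definition eval_lift :: "lift3 \<Rightarrow> complex \<times> complex \<times> complex \<Rightarrow> complex \<times> complex \<times> complex"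
  where "eval_lift F = (\<lambda>(u, v, w). case F of (A, B, C) \<Rightarrow>
     (poly3_eval A u v w, poly3_eval B u v w, poly3_eval C u v w))"

lemma eval_iter_lift_R: "eval_lift (iter_lift R_lift n) = R_point ^^ n"
proof (induction n)
  case 0
  show ?case
    by (simp add: eval_lift_def fun_eq_iff)
next
  case (Suc n)
  obtain A B C where ABC: "iter_lift R_lift n = (A, B, C)"
    by (cases "iter_lift R_lift n")
  have "eval_lift (iter_lift R_lift (Suc n)) = R_point \<circ> eval_lift (iter_lift R_lift n)"
    unfolding iter_lift_R_Suc ABC by (simp add: eval_lift_def R_point_def fun_eq_iff)
  with Suc.IH show ?case
    by simp
qed

definition scale3 :: "complex \<Rightarrow> complex \<times> complex \<times> complex \<Rightarrow> complex \<times> complex \<times> complex"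
  where "scale3 t = (\<lambda>(u, v, w). (t * u, t * v, t * w))"

lemma R_point_scale3: "R_point (scale3 t x) = scale3 (t ^ 4) (R_point x)"
  by (cases x) (simp add: R_point_def scale3_def power2_eq_square power4_eq_xxxx algebra_simps)

lemma R_point_iter_scale3: "(R_point ^^ n) (scale3 t x) = scale3 (t ^ 4 ^ n) ((R_point ^^ n) x)"
proof (induction n)
  case (Suc n)
  have "(t ^ 4 ^ n) ^ 4 = t ^ 4 ^ Suc n"
    by (simp flip: power_mult add: mult.commute)
  with Suc.IH show ?case
    by (simp add: R_point_scale3)
qed (simp add: scale3_def split: prod.split)

lemma R_point_iter_plane: "(R_point ^^ n) (u, 0, w) = (u ^ 4 ^ n, 0, w ^ 4 ^ n)"
  by (induction n) (simp_all add: R_point_def power_mult[symmetric] mult.commute)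

section \<open>Polynomials without zeros on a line\<close>

lemma poly_constant_if_no_roots:
  fixes p :: "complex poly"
  assumes "\<And>t. poly p t \<noteq> 0"
  shows "poly p a = poly p b"
proof -
  have "constant (poly p)"
    using fundamental_theorem_of_algebra assms by blast
  then show ?thesis
    unfolding constant_def by blast
qed

lemma poly_at_0_if_constant_off_0:
  fixes p :: "'a::{idom, ring_char_0} poly"
  assumes "\<And>t. t \<noteq> 0 \<Longrightarrow> poly p t = c"
  shows "poly p 0 = c"
proof (rule ccontr)
  assume "poly p 0 \<noteq> c"
  then have "p - [:c:] \<noteq> 0"
    by (metis poly_0 poly_diff poly_pCons mult_zero_left add_0_right right_minus_eq)
  then have "finite {t. poly (p - [:c:]) t = 0}"
    by (rule poly_roots_finite)
  moreover have "UNIV - {0} \<subseteq> {t. poly (p - [:c:]) t = 0}"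
    using assms by auto
  ultimately have "finite (UNIV - {0::'a})"
    by (rule finite_subset[rotated])
  then show False
    by (simp add: infinite_UNIV_char_0)
qed

lemma poly3_eval_constant_on_line:
  assumes "\<And>t. poly3_eval h (a1 + t * b1) (a2 + t * b2) (a3 + t * b3) \<noteq> 0"
  shows "poly3_eval h (a1 + b1) (a2 + b2) (a3 + b3) = poly3_eval h a1 a2 a3"
proof -
  let ?p = "eval3 (\<lambda>x. [:x:]) h [:a1, b1:] [:a2, b2:] [:a3, b3:]"
  have p: "poly ?p t = poly3_eval h (a1 + t * b1) (a2 + t * b2) (a3 + t * b3)" for t
    by (simp add: poly_eval3_curve)
  have "poly ?p 1 = poly ?p 0"
    by (rule poly_constant_if_no_roots) (simp add: p assms)
  then show ?thesis
    by (simp add: p)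
qed

lemma poly3_eval_on_line_at_0:
  assumes "\<And>t. t \<noteq> 0 \<Longrightarrow> poly3_eval h (a1 + t * b1) (a2 + t * b2) (a3 + t * b3) = c"
  shows "poly3_eval h a1 a2 a3 = c"
proof -
  let ?p = "eval3 (\<lambda>x. [:x:]) h [:a1, b1:] [:a2, b2:] [:a3, b3:]"
  have p: "poly ?p t = poly3_eval h (a1 + t * b1) (a2 + t * b2) (a3 + t * b3)" for t
    by (simp add: poly_eval3_curve)
  have "poly ?p 0 = c"
    by (rule poly_at_0_if_constant_off_0) (simp add: p assms)
  then show ?thesis
    by (simp add: p)
qed

section \<open>The iterates of R are reduced\<close>

lemma is_unit_poly3_iff: "is_unit (u :: poly3) \<longleftrightarrow> (\<exists>c. c \<noteq> 0 \<and> u = const3 c)"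
proof
  assume "is_unit u"
  then show "\<exists>c. c \<noteq> 0 \<and> u = const3 c"
    by (auto simp: is_unit_poly_iff const3_def)
next
  assume "\<exists>c. c \<noteq> 0 \<and> u = const3 c"
  then obtain c where "c \<noteq> 0" "u = const3 c"
    by blast
  then have "u * const3 (1 / c) = 1"
    using comm_ring_hom.hom_mult[OF comm_ring_hom_const3, of c "1 / c"]
    by (simp add: comm_ring_hom.hom_one[OF comm_ring_hom_const3])
  then show "is_unit u"
    by (rule dvdI[OF sym])
qed

lemma common_divisor_nonzero_at_origin:
  fixes h P Q :: poly3
  assumes "h dvd P" "h dvd Q"
    and no_common_zero: "\<And>u w. poly3_eval P u 0 w = 0 \<Longrightarrow> poly3_eval Q u 0 w = 0 \<Longrightarrow> u = 0 \<and> w = 0"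
  shows "poly3_eval h 0 0 0 \<noteq> 0"
proof -
  obtain g1 g2 where "P = h * g1" "Q = h * g2"
    using assms(1,2) by (elim dvdE)
  then have h_zero: "u = 0 \<and> w = 0" if "poly3_eval h u 0 w = 0" for u w
    using that by (intro no_common_zero) simp_all
  define c where "c = poly3_eval h 0 0 1"
  have "c \<noteq> 0"
    using h_zero[of 0 1] by (auto simp: c_def)
  have "poly3_eval h s 0 0 = c" if "s \<noteq> 0" for s
  proof -
    have "poly3_eval h (s + t * - s) (0 + t * 0) (0 + t * 1) \<noteq> 0" for t
      using h_zero[of "s + t * - s" t] \<open>s \<noteq> 0\<close> by auto
    then have "poly3_eval h (s + - s) (0 + 0) (0 + 1) = poly3_eval h s 0 0"
      by (rule poly3_eval_constant_on_line)
    then show ?thesis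
      by (simp add: c_def)
  qed
  then have "poly3_eval h 0 0 0 = c"
    using poly3_eval_on_line_at_0[of h 0 1 0 0 0 0 c] by simp
  with \<open>c \<noteq> 0\<close> show ?thesis
    by simp
qed

lemma divisor_of_homogeneous_eq_const:
  fixes h P :: poly3
  assumes "h dvd P" "P \<noteq> 0"
    and homogeneous: "\<And>t u v w. poly3_eval P (t * u) (t * v) (t * w) = t ^ N * poly3_eval P u v w"
    and origin: "poly3_eval h 0 0 0 \<noteq> 0"
  shows "h = const3 (poly3_eval h 0 0 0)"
proof -
  define c where "c = poly3_eval h 0 0 0"
  obtain g where P: "P = h * g"
    using assms(1) by (rule dvdE)
  have "poly3_eval h u v w = c" if "poly3_eval P u v w \<noteq> 0" for u v w
  proof -
    have "poly3_eval h (0 + t * u) (0 + t * v) (0 + t * w) \<noteq> 0" for t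
    proof (cases "t = 0")
      case False
      then have "poly3_eval P (t * u) (t * v) (t * w) \<noteq> 0"
        using that by (simp add: homogeneous)
      then show ?thesis
        by (simp add: P)
    qed (use origin in simp)
    from poly3_eval_constant_on_line[OF this] show ?thesis
      by (simp add: c_def)
  qed
  then have "poly3_eval ((h - const3 c) * P) u v w = 0" for u v w
    by (cases "poly3_eval P u v w = 0") simp_all
  then have "(h - const3 c) * P = 0"
    by (rule poly3_eq_0_if_eval_eq_0)
  with \<open>P \<noteq> 0\<close> show ?thesis
    by (simp add: c_def)
qed

lemma reduced_iter_lift_R: "reduced_lift (iter_lift R_lift n)"
proof -
  obtain F1 F2 F3 where F: "iter_lift R_lift n = (F1, F2, F3)"
    by (cases "iter_lift R_lift n")
  have R_point_iter: "(R_point ^^ n) (u, v, w) = (poly3_eval F1 u v w, poly3_eval F2 u v w, poly3_eval F3 u v w)" for u v w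
    using fun_cong[OF eval_iter_lift_R, of n "(u, v, w)"] by (simp add: F eval_lift_def)
  have homogeneous: "poly3_eval F1 (t * u) (t * v) (t * w) = t ^ 4 ^ n * poly3_eval F1 u v w" for t u v w
    using R_point_iter_scale3[of n t "(u, v, w)"] by (simp add: R_point_iter scale3_def)
  have plane: "poly3_eval F1 u 0 w = u ^ 4 ^ n" "poly3_eval F3 u 0 w = w ^ 4 ^ n" for u w
    using R_point_iter_plane[of n u w] by (simp_all add: R_point_iter)
  have "F1 \<noteq> 0"
    using plane(1)[of 1 0] by auto
  have "is_unit h" if "h dvd F1" "h dvd F2" "h dvd F3" for h
  proof -
    have "poly3_eval h 0 0 0 \<noteq> 0"
      using that(1,3) by (rule common_divisor_nonzero_at_origin) (simp add: plane)
    with that(1) \<open>F1 \<noteq> 0\<close> homogeneous have "h = const3 (poly3_eval h 0 0 0)"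
      by (intro divisor_of_homogeneous_eq_const)
    with \<open>poly3_eval h 0 0 0 \<noteq> 0\<close> show ?thesis
      by (auto simp: is_unit_poly3_iff)
  qed
  then show ?thesis
    by (simp add: F reduced_lift_def)
qed

section \<open>The iterates of R are homogeneous\<close>

text \<open>H d x means that x is homogeneous of degree d; graded_poly H d p then says that
p = \<Sum> c_k X^k is homogeneous of degree d, i.e. each c_k is homogeneous of degree d - k
and c_k = 0 for k > d.\<close>

definition is_grading :: "(nat \<Rightarrow> 'a::comm_semiring_1 \<Rightarrow> bool) \<Rightarrow> bool"
  where "is_grading H \<longleftrightarrow> (\<forall>d. H d 0) \<and> H 0 1 \<and> (\<forall>d x y. H d x \<longrightarrow> H d y \<longrightarrow> H d (x + y))
     \<and> (\<forall>a b x y. H a x \<longrightarrow> H b y \<longrightarrow> H (a + b) (x * y))"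

definition graded_poly :: "(nat \<Rightarrow> 'a::comm_semiring_1 \<Rightarrow> bool) \<Rightarrow> nat \<Rightarrow> 'a poly \<Rightarrow> bool"
  where "graded_poly H d p \<longleftrightarrow> (\<forall>k. if k \<le> d then H (d - k) (coeff p k) else coeff p k = 0)"

lemma is_grading_sum:
  assumes "is_grading H" "\<And>i. i \<in> A \<Longrightarrow> H d (f i)"
  shows "H d (sum f A)"
  using assms(2) by (induction A rule: infinite_finite_induct) (use assms(1) in \<open>simp_all add: is_grading_def\<close>)

lemma is_grading_power:
  assumes "is_grading H" "H d x"
  shows "H (n * d) (x ^ n)"
  using assms by (induction n) (auto simp: is_grading_def)

lemma graded_poly_mult:
  assumes H: "is_grading H" and p: "graded_poly H a p" and q: "graded_poly H b q"
  shows "graded_poly H (a + b) (p * q)"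
  unfolding graded_poly_def
proof (intro allI)
  fix k
  have p_high: "coeff p i = 0" if "i > a" for i
    using p that unfolding graded_poly_def by (metis not_le)
  have q_high: "coeff q i = 0" if "i > b" for i
    using q that unfolding graded_poly_def by (metis not_le)
  have summand: "H (a + b - k) (coeff p i * coeff q (k - i))" if "i \<le> k" for i
  proof (cases "i \<le> a \<and> k - i \<le> b")
    case True
    then have "H ((a - i) + (b - (k - i))) (coeff p i * coeff q (k - i))"
      using H p q unfolding is_grading_def graded_poly_def by metis
    moreover have "(a - i) + (b - (k - i)) = a + b - k"
      using True that by arith
    ultimately show ?thesis
      by simp
  next
    case False
    then have "coeff p i * coeff q (k - i) = 0"
      using p_high q_high by force
    with H show ?thesis
      by (simp add: is_grading_def)
  qed
  show "if k \<le> a + b then H (a + b - k) (coeff (p * q) k) else coeff (p * q) k = 0"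
  proof (cases "k \<le> a + b")
    case True
    have "H (a + b - k) (\<Sum>i\<le>k. coeff p i * coeff q (k - i))"
      by (rule is_grading_sum[OF H]) (simp add: summand)
    with True show ?thesis
      by (simp add: coeff_mult)
  next
    case False
    have "coeff p i * coeff q (k - i) = 0" if "i \<le> k" for i
    proof -
      have "a < i \<or> b < k - i"
        using False that by arith
      then show ?thesis
        using p_high q_high by auto
    qed
    with False show ?thesis
      by (simp add: coeff_mult)
  qed
qed

lemma is_grading_graded_poly:
  assumes "is_grading H"
  shows "is_grading (graded_poly H)"
  unfolding is_grading_def
proof (intro conjI allI impI)
  show "graded_poly H d 0" for d
    using assms by (simp add: is_grading_def graded_poly_def)
  show "graded_poly H 0 1"
    using assms by (simp add: is_grading_def graded_poly_def coeff_1)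
  show "graded_poly H d (p + q)" if "graded_poly H d p" "graded_poly H d q" for d p q
    using assms that by (auto simp: is_grading_def graded_poly_def split: if_splits)
  show "graded_poly H (a + b) (p * q)" if "graded_poly H a p" "graded_poly H b q" for a b p q
    using graded_poly_mult[OF assms that] .
qed

lemma graded_poly_const: "is_grading H \<Longrightarrow> H d x \<Longrightarrow> graded_poly H d [:x:]"
  by (auto simp: is_grading_def graded_poly_def coeff_pCons split: nat.splits)

lemma graded_poly_X: "is_grading H \<Longrightarrow> graded_poly H 1 [:0, 1:]"
  by (auto simp: is_grading_def graded_poly_def coeff_pCons split: nat.splits)

definition const_grading :: "nat \<Rightarrow> 'a::comm_semiring_1 \<Rightarrow> bool"
  where "const_grading d c \<longleftrightarrow> c = 0 \<or> d = 0"

definition graded3 :: "nat \<Rightarrow> poly3 \<Rightarrow> bool"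
  where "graded3 = graded_poly (graded_poly (graded_poly const_grading))"

lemma is_grading_const_grading: "is_grading const_grading"
  by (auto simp: is_grading_def const_grading_def)

lemma is_grading_graded3: "is_grading graded3"
  unfolding graded3_def by (intro is_grading_graded_poly is_grading_const_grading)

lemma graded3_vars: "graded3 1 varU" "graded3 1 varV" "graded3 1 varW"
  unfolding graded3_def varU_def varV_def varW_def
  by (intro graded_poly_const graded_poly_X is_grading_graded_poly is_grading_const_grading)+

lemma graded3_imp_homogeneous3:
  assumes "graded3 d P"
  shows "homogeneous3 d P"
  unfolding homogeneous3_def coeff3_def
proof (intro allI impI)
  fix i j k
  assume nz: "coeff (coeff (coeff P k) j) i \<noteq> 0"
  have "k \<le> d" "graded_poly (graded_poly const_grading) (d - k) (coeff P k)"
    using assms nz unfolding graded3_def graded_poly_def by (metis coeff_0)+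
  moreover from this have "j \<le> d - k" "graded_poly const_grading (d - k - j) (coeff (coeff P k) j)"
    using nz unfolding graded_poly_def by (metis coeff_0)+
  moreover from this have "i \<le> d - k - j" "const_grading (d - k - j - i) (coeff (coeff (coeff P k) j) i)"
    using nz unfolding graded_poly_def by metis+
  ultimately show "i + j + k = d"
    using nz by (simp add: const_grading_def)
qed

lemma homogeneous_iter_lift_R: "homogeneous_lift (4 ^ n) (iter_lift R_lift n)"
proof -
  have "graded3 (4 ^ n) A \<and> graded3 (4 ^ n) B \<and> graded3 (4 ^ n) C"
    if "iter_lift R_lift n = (A, B, C)" for A B C
    using that
  proof (induction n arbitrary: A B C)
    case 0
    then show ?case
      using graded3_vars by auto
  next
    case (Suc n)
    obtain A' B' C' where F: "iter_lift R_lift n = (A', B', C')"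
      by (cases "iter_lift R_lift n")
    define N where "N = (4::nat) ^ n"
    have "graded3 N A'" "graded3 N B'" "graded3 N C'"
      using Suc.IH[OF F] by (simp_all add: N_def)
    have mult: "graded3 (a + b) (x * y)" if "graded3 a x" "graded3 b y" for a b x y
      using is_grading_graded3 that by (simp add: is_grading_def)
    have add: "graded3 d (x + y)" if "graded3 d x" "graded3 d y" for d x y
      using is_grading_graded3 that by (simp add: is_grading_def)
    have square: "graded3 (2 * d) (x^2)" if "graded3 d x" for d x
      using is_grading_power[OF is_grading_graded3 that] .
    have "A = (A'^2 + B'^2)^2" "B = B'^2 * (A' + C')^2" "C = (B'^2 + C'^2)^2"
      using Suc.prems unfolding iter_lift_R_Suc F by simp_all
    moreover have "4 ^ Suc n = 2 * (2 * N)" "4 ^ Suc n = 2 * N + 2 * N"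
      by (simp_all add: N_def)
    ultimately show ?case
      using \<open>graded3 N A'\<close> \<open>graded3 N B'\<close> \<open>graded3 N C'\<close>
      by (metis add mult square)
  qed
  then show ?thesis
    by (auto simp: homogeneous_lift_def graded3_imp_homogeneous3 split: prod.split)
qed

lemma reduced_same_map_unit_multiple:
  assumes same: "same_map (G1, G2, G3) (F1, F2, F3)"
    and reduced_G: "reduced_lift (G1, G2, G3)" and reduced_F: "reduced_lift (F1, F2, F3)"
    and "F1 \<noteq> 0"
  shows "\<exists>u. is_unit u \<and> G1 = u * F1 \<and> G2 = u * F2 \<and> G3 = u * F3"
proof -
  define D where "D = gcd G1 F1"
  have "D \<noteq> 0"
    using \<open>F1 \<noteq> 0\<close> by (simp add: D_def)
  obtain a b where G1: "G1 = a * D" and F1: "F1 = b * D" and "coprime a b"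
    using gcd_coprime_exists[of G1 F1] \<open>D \<noteq> 0\<close> unfolding D_def by blast
  have cross: "Gi * b = a * Fi" if "G1 * Fi = Gi * F1" for Gi Fi
  proof -
    have "(a * Fi) * D = (Gi * b) * D"
      using that unfolding G1 F1 by (simp add: ac_simps)
    then show ?thesis
      using mult_right_cancel[OF \<open>D \<noteq> 0\<close>] by simp
  qed
  have G_b: "G1 * b = a * F1" "G2 * b = a * F2" "G3 * b = a * F3"
    using same by (auto simp: same_map_def intro: cross)
  have divides: "b dvd Fi \<and> a dvd Gi" if "Gi * b = a * Fi" for Gi Fi
  proof
    have "b dvd a * Fi"
      by (metis that dvd_triv_right)
    then show "b dvd Fi"
      using \<open>coprime a b\<close> by (simp add: coprime_dvd_mult_right_iff coprime_commute)
    have "a dvd Gi * b"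
      by (simp add: that)
    then show "a dvd Gi"
      using \<open>coprime a b\<close> by (simp add: coprime_dvd_mult_left_iff)
  qed
  have "is_unit b"
    using reduced_F divides[OF G_b(1)] divides[OF G_b(2)] divides[OF G_b(3)]
    by (simp add: reduced_lift_def)
  have "is_unit a"
    using reduced_G divides[OF G_b(1)] divides[OF G_b(2)] divides[OF G_b(3)]
    by (simp add: reduced_lift_def)
  obtain b' where "b * b' = 1"
    using \<open>is_unit b\<close> by (metis dvdE)
  have "Gi = (a * b') * Fi" if "Gi * b = a * Fi" for Gi Fi
  proof -
    have "Gi = (Gi * b) * b'"
      using \<open>b * b' = 1\<close> by (simp add: mult.assoc)
    with that show ?thesis
      by (simp add: ac_simps)
  qed
  moreover have "is_unit (a * b')"
  proof -
    have "is_unit b'"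
      using \<open>b * b' = 1\<close> by (metis dvdI mult.commute)
    with \<open>is_unit a\<close> show ?thesis
      by (rule unit_prod)
  qed
  ultimately show ?thesis
    using G_b by blast
qed

lemma coeff3_const3_mult: "coeff3 (const3 c * P) i j k = c * coeff3 P i j k"
  by (simp add: const3_def coeff3_def)

lemma map_deg_eqI:
  assumes "reduced_lift F" "homogeneous_lift N F" "fst F \<noteq> 0"
  shows "map_deg F = N"
proof -
  obtain F1 F2 F3 where F: "F = (F1, F2, F3)"
    by (cases F)
  have "F1 \<noteq> 0"
    using assms(3) by (simp add: F)
  then obtain i j k where nz: "coeff3 F1 i j k \<noteq> 0"
    by (metis coeff3_def coeff_0 poly_eqI)
  have degree: "d = N"
    if same: "same_map G F" and reduced: "reduced_lift G" and homogeneous: "homogeneous_lift d G" for G d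
  proof -
    obtain G1 G2 G3 where G: "G = (G1, G2, G3)"
      by (cases G)
    obtain u where "is_unit u" "G1 = u * F1"
      using reduced_same_map_unit_multiple same reduced assms(1) \<open>F1 \<noteq> 0\<close> by (metis F G)
    then obtain c where "c \<noteq> 0" "G1 = const3 c * F1"
      by (auto simp: is_unit_poly3_iff)
    then have "coeff3 G1 i j k \<noteq> 0"
      using nz by (simp add: coeff3_const3_mult)
    then have "i + j + k = d"
      using homogeneous by (simp add: G homogeneous_lift_def homogeneous3_def)
    moreover have "i + j + k = N"
      using nz assms(2) by (simp add: F homogeneous_lift_def homogeneous3_def)
    ultimately show ?thesis
      by simp
  qed
  have "same_map F F"
    using \<open>F1 \<noteq> 0\<close> by (simp add: F same_map_def nonzero_lift_def mult.commute)
  then show ?thesis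
    unfolding map_deg_def using assms(1,2) degree by (intro the_equality) blast+
qed

lemma map_deg_iter_lift_R: "map_deg (iter_lift R_lift n) = 4 ^ n"
proof (rule map_deg_eqI)
  show "reduced_lift (iter_lift R_lift n)"
    by (rule reduced_iter_lift_R)
  show "homogeneous_lift (4 ^ n) (iter_lift R_lift n)"
    by (rule homogeneous_iter_lift_R)
  have "fst ((R_point ^^ n) (1, 0, 0)) = 1"
    by (simp add: R_point_iter_plane)
  then show "fst (iter_lift R_lift n) \<noteq> 0"
    by (auto simp: eval_iter_lift_R[symmetric] eval_lift_def split: prod.splits)
qed

theorem proposition4p4:
  shows "algebraically_stable R_lift"
proof -
  have "iter_lift R_lift 1 = R_lift"
    using iter_lift_R_Suc[of 0] by (simp add: R_lift_def)
  then have "map_deg R_lift = 4"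
    using map_deg_iter_lift_R[of 1] by simp
  then show ?thesis
    by (simp add: algebraically_stable_def map_deg_iter_lift_R)
qed

end
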